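(* For every $w\in A^*$, $$\Big\|\big(d_\ell(\hat p_{n,\ell}(\cdot|w),\bar p_{n,\ell}(\cdot|w))\big)_{\ell=1}^{L}\Big\|_{L,k}\;\le\;\big\|(\mathrm{conf}_\ell(w))_{\ell=1}^{L}\big\|_{L,r}.$$
   Context: Setting: $A$ is a finite alphabet, $A^*$ the set of finite and left-infinite $A$-valued strings; for $w,w'\in A^*$, $w\preceq w'$ means $w$ is a suffix of $w'$. There are $L$ stationary processes $X(\ell)$, $\ell=1,\dots,L$, with $p_\ell(a\mid x)=\Pr(X(\ell)_0=a\mid X(\ell)^{-1}_{-\infty}=x)$, and for each $\ell$ we observe a sample $X_1^n(\ell)$. $N_{k,\ell}(w)$ is the number of occurrences of $w$ in $X_1^k(\ell)$. If $\min_{1\le\ell\le L}N_{n-1,\ell}(w)>0$, the empirical probability is $\hat p_{n,\ell}(a|w)=N_{n,\ell}(wa)/N_{n-1,\ell}(w)$ and the oracle probability is $\bar p_{n,\ell}(a|w)=\frac{1}{N_{n-1,\ell}(w)}\sum_{i=|w|+1}^{n}\mathbf 1\{X^{i-1}_{i-|w|}(\ell)=w\}\,p_\ell(a|X^{i-1}_{-\infty}(\ell))$; otherwise both are set to $1/|A|$. Each $d_\ell:\Delta^A\times\Delta^A\to[0,1]$ is a metric on probability distributions over $A$. For $v\in\mathbb R^L$ and $q\ge1$, $\|v\|_{L,q}=(\frac1L\sum_{\ell=1}^L|v_\ell|^q)^{1/q}$ (and $\|v\|_{L,\infty}=\max_\ell|v_\ell|$). A confidence radius $\mathrm{conf}(w)=(\mathrm{conf}_1(w),\dots,\mathrm{conf}_L(w))$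 with $0\le\mathrm{conf}_\ell(w)\le1$ is given for each $w$, componentwise increasing ($\mathrm{conf}_\ell(w)\le\mathrm{conf}_\ell(w')$ if $w\preceq w'$). The positive (extended) integers $k,r,m$ satisfy $k\le m$ and $r\ge km/(m-k)$, or $k\le r=m=\infty$. Assume the event $$\mathrm{Good}_m=\bigcap_{w\in A^*}\Big\{\Big\|\Big(\tfrac{d_\ell(\bar p_{n,\ell}(\cdot|w),\hat p_{n,\ell}(\cdot|w))}{\mathrm{conf}_\ell(w)}\Big)_{\ell=1}^L\Big\|_{L,m}\le1\ \text{ whenever }\min_{1\le\ell\le L}N_{n-1,\ell}(w)>0\Big\}$$ occurs. *)

theory Defs
  imports Complex_Main "HOL-Library.Extended_Nat"
begin

text \<open>Strings in A^*: finite strings (a list, last element = most recent symbol)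
  and left-infinite strings (f 0 = most recent symbol, f 1 the one before, ...).\<close>
datatype 'a str = Fin "'a list" | Inf "nat \<Rightarrow> 'a"

fun suffix_str :: "'a str \<Rightarrow> 'a str \<Rightarrow> bool" where
  "suffix_str (Fin u) (Fin v) = (\<exists>z. v = z @ u)"
| "suffix_str (Fin u) (Inf f) = (\<forall>j<length u. u ! (length u - 1 - j) = f j)"
| "suffix_str (Inf f) (Fin v) = False"
| "suffix_str (Inf f) (Inf g) = (f = g)"

definition matches_at :: "(int \<Rightarrow> 'a) \<Rightarrow> 'a list \<Rightarrow> int \<Rightarrow> bool" where
  "matches_at X u i = (\<forall>j<length u. X (i - int (length u) + 1 + int j) = u ! j)"

text \<open>N_k(u): number of occurrences of u in X_1^k (end positions i with |u| \<le> i \<le> k).\<close>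
definition cnt :: "(int \<Rightarrow> 'a) \<Rightarrow> nat \<Rightarrow> 'a list \<Rightarrow> nat" where
  "cnt X k u = card {i \<in> {int (length u)..int k}. matches_at X u i}"

fun Cnt :: "(int \<Rightarrow> 'a) \<Rightarrow> nat \<Rightarrow> 'a str \<Rightarrow> nat" where
  "Cnt X k (Fin u) = cnt X k u"
| "Cnt X k (Inf f) = 0"

definition allpos :: "(nat \<Rightarrow> int \<Rightarrow> 'a) \<Rightarrow> nat \<Rightarrow> nat \<Rightarrow> 'a str \<Rightarrow> bool" where
  "allpos X L n w = (\<forall>l\<in>{1..L}. Cnt (X l) (n - 1) w > 0)"

definition phat :: "(nat \<Rightarrow> int \<Rightarrow> 'a::finite) \<Rightarrow> nat \<Rightarrow> nat \<Rightarrow> nat \<Rightarrow> 'a str \<Rightarrow> 'a \<Rightarrow> real" where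
  "phat X L n l w a =
     (if allpos X L n w then
        (case w of Fin u \<Rightarrow> real (cnt (X l) n (u @ [a])) / real (cnt (X l) (n - 1) u)
                 | Inf f \<Rightarrow> 1 / real (card (UNIV :: 'a set)))
      else 1 / real (card (UNIV :: 'a set)))"

text \<open>Oracle probability \<open>p_bar_{n,l}(a|w)\<close>; \<open>p l x a\<close> = p_l(a|x) for a left-infinite past x.\<close>
definition pbar :: "(nat \<Rightarrow> int \<Rightarrow> 'a::finite) \<Rightarrow> (nat \<Rightarrow> (nat \<Rightarrow> 'a) \<Rightarrow> 'a \<Rightarrow> real)
    \<Rightarrow> nat \<Rightarrow> nat \<Rightarrow> nat \<Rightarrow> 'a str \<Rightarrow> 'a \<Rightarrow> real" where
  "pbar X p L n l w a =
     (if allpos X L n w then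
        (case w of Fin u \<Rightarrow>
            ((\<Sum>i\<in>{length u + 1..n}.
               (if matches_at (X l) u (int i - 1)
                then p l (\<lambda>j. X l (int i - 1 - int j)) a else 0))
            / real (cnt (X l) (n - 1) u))
                 | Inf f \<Rightarrow> 1 / real (card (UNIV :: 'a set)))
      else 1 / real (card (UNIV :: 'a set)))"

definition simplex :: "('a::finite \<Rightarrow> real) set" where
  "simplex = {f. (\<forall>a. 0 \<le> f a) \<and> sum f UNIV = 1}"

definition metric_on_simplex :: "(('a::finite \<Rightarrow> real) \<Rightarrow> ('a \<Rightarrow> real) \<Rightarrow> real) \<Rightarrow> bool" where
  "metric_on_simplex d =
    (\<forall>x\<in>simplex. \<forall>y\<in>simplex. 0 \<le> d x y \<and> d x y \<le> 1 \<and> (d x y = 0 \<longleftrightarrow> x = y)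
        \<and> d x y = d y x \<and> (\<forall>z\<in>simplex. d x z \<le> d x y + d y z))"

definition normLq :: "nat \<Rightarrow> enat \<Rightarrow> (nat \<Rightarrow> real) \<Rightarrow> real" where
  "normLq L q v = (case q of
      enat q' \<Rightarrow> ((1 / real L) * (\<Sum>l=1..L. \<bar>v l\<bar> ^ q')) powr (1 / real q')
    | \<infinity> \<Rightarrow> Max ((\<lambda>l. \<bar>v l\<bar>) ` {1..L}))"

text \<open>Ratio d/conf with the conventions 0/0 = 0 and x/0 = \<infinity> for x > 0
  (the latter excluded in Good by requiring d = 0 wherever conf = 0).\<close>
definition Good :: "(nat \<Rightarrow> int \<Rightarrow> 'a::finite) \<Rightarrow> (nat \<Rightarrow> (nat \<Rightarrow> 'a) \<Rightarrow> 'a \<Rightarrow> real)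
    \<Rightarrow> (nat \<Rightarrow> ('a \<Rightarrow> real) \<Rightarrow> ('a \<Rightarrow> real) \<Rightarrow> real) \<Rightarrow> (nat \<Rightarrow> 'a str \<Rightarrow> real)
    \<Rightarrow> nat \<Rightarrow> nat \<Rightarrow> enat \<Rightarrow> bool" where
  "Good X p d conf L n m =
    (\<forall>w. allpos X L n w \<longrightarrow>
       ((\<forall>l\<in>{1..L}. conf l w = 0 \<longrightarrow> d l (pbar X p L n l w) (phat X L n l w) = 0) \<and>
        normLq L m (\<lambda>l. d l (pbar X p L n l w) (phat X L n l w) / conf l w) \<le> 1))"

definition exps_ok :: "enat \<Rightarrow> enat \<Rightarrow> enat \<Rightarrow> bool" where
  "exps_ok k r m =
    ((\<exists>k' m'. k = enat k' \<and> m = enat m' \<and> 1 \<le> k' \<and> k' \<le> m' \<and>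
        (if k' = m' then r = \<infinity>
         else (r = \<infinity> \<or> (\<exists>r'. r = enat r' \<and> real (k' * m') / real (m' - k') \<le> real r'))))
     \<or> (1 \<le> k \<and> k \<le> r \<and> r = \<infinity> \<and> m = \<infinity>))"

end

theory Submission
  imports Defs "HOL-Analysis.Convex"
begin

text \<open>Write the distance vector as the product of the ratio vector \<open>x\<^sub>l = d\<^sub>l / conf\<^sub>l\<close>,
  whose \<open>L,m\<close>-norm is at most 1 on \<open>Good\<^sub>m\<close>, with the confidence vector. The generalised
  Hoelder inequality for normalised power means, \<open>\<parallel>x c\<parallel>\<^sub>k \<le> \<parallel>x\<parallel>\<^sub>m \<parallel>c\<parallel>\<^sub>s\<close> with
  \<open>1/k = 1/m + 1/s\<close>, and the monotonicity of power means in the exponent (\<open>s \<le> r\<close>) give the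
  bound; infinite exponents reduce to maxima. The swap of the arguments of \<open>d\<^sub>l\<close> is
  legitimate because \<open>p_hat\<close> and \<open>p_bar\<close> are averages of probability vectors over the
  positions following an occurrence of \<open>w\<close>, hence lie in the simplex.\<close>

section \<open>Power means and Hoelder's inequality\<close>

lemma Holder_inequality_sum:
  fixes F G :: "'i \<Rightarrow> real"
  assumes I: "finite I" and pq: "p > 1" "q > 1" "1/p + 1/q = 1"
    and F: "\<And>i. i \<in> I \<Longrightarrow> 0 \<le> F i" and G: "\<And>i. i \<in> I \<Longrightarrow> 0 \<le> G i"
  shows "(\<Sum>i\<in>I. F i * G i) \<le> (\<Sum>i\<in>I. F i powr p) powr (1/p) * (\<Sum>i\<in>I. G i powr q) powr (1/q)"
proof -
  define A where "A = (\<Sum>i\<in>I. F i powr p) powr (1/p)"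
  define B where "B = (\<Sum>i\<in>I. G i powr q) powr (1/q)"
  show ?thesis
  proof (cases "A = 0 \<or> B = 0")
    case True
    then have "\<forall>i\<in>I. F i = 0 \<or> G i = 0"
      using I F G pq by (auto simp: A_def B_def sum_nonneg_eq_0_iff)
    then show ?thesis by (simp add: sum.neutral)
  next
    case False
    then have A: "A > 0" and B: "B > 0" by (auto simp: A_def B_def)
    have Ap: "A powr p = (\<Sum>i\<in>I. F i powr p)" and Bq: "B powr q = (\<Sum>i\<in>I. G i powr q)"
      using pq by (auto simp: A_def B_def powr_powr sum_nonneg)
    have "(\<Sum>i\<in>I. F i * G i) / (A * B) = (\<Sum>i\<in>I. F i / A * (G i / B))"
      by (simp add: sum_divide_distrib)
    also have "\<dots> \<le> (\<Sum>i\<in>I. (F i / A) powr p / p + (G i / B) powr q / q)"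
      using F G A B by (intro sum_mono Youngs_inequality[OF pq]) auto
    also have "\<dots> = (\<Sum>i\<in>I. F i powr p) / A powr p / p + (\<Sum>i\<in>I. G i powr q) / B powr q / q"
      using F G A B by (simp add: powr_divide sum.distrib sum_divide_distrib)
    also have "\<dots> = 1"
      using A B pq by (simp flip: Ap Bq)
    finally show ?thesis
      using A B by (simp add: A_def B_def divide_le_eq mult.commute)
  qed
qed

definition power_mean :: "nat \<Rightarrow> real \<Rightarrow> (nat \<Rightarrow> real) \<Rightarrow> real" where
  "power_mean L a f = ((1 / real L) * (\<Sum>l=1..L. \<bar>f l\<bar> powr a)) powr (1 / a)"

lemma power_mean_nonneg: "0 \<le> power_mean L a f"
  by (simp add: power_mean_def)

lemma power_mean_Holder:
  assumes L: "1 \<le> L" and a: "a > 0" "p > 0" "q > 0" and e: "1/a = 1/p + 1/q"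
  shows "power_mean L a (\<lambda>l. f l * g l) \<le> power_mean L p f * power_mean L q g"
proof -
  have "a/p + a/q = a * (1/p + 1/q)"
    by (simp add: field_simps)
  then have ap: "a/p + a/q = 1"
    using a by (simp flip: e)
  moreover have "0 < a/p" "0 < a/q"
    using a by auto
  ultimately have "a/p < 1" "a/q < 1"
    by linarith+
  then have pq: "p/a > 1" "q/a > 1" "1/(p/a) + 1/(q/a) = 1"
    using a ap by (auto simp: field_simps)
  define S where "S = (\<Sum>l=1..L. \<bar>f l * g l\<bar> powr a)"
  define Sf where "Sf = (\<Sum>l=1..L. \<bar>f l\<bar> powr p)"
  define Sg where "Sg = (\<Sum>l=1..L. \<bar>g l\<bar> powr q)"
  have "S = (\<Sum>l=1..L. \<bar>f l\<bar> powr a * \<bar>g l\<bar> powr a)"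
    by (simp add: S_def abs_mult powr_mult)
  also have "\<dots> \<le> (\<Sum>l=1..L. (\<bar>f l\<bar> powr a) powr (p/a)) powr (1/(p/a))
                 * (\<Sum>l=1..L. (\<bar>g l\<bar> powr a) powr (q/a)) powr (1/(q/a))"
    by (rule Holder_inequality_sum[OF _ pq]) auto
  also have "\<dots> = Sf powr (a/p) * Sg powr (a/q)"
    using a by (simp add: Sf_def Sg_def powr_powr)
  finally have S: "S \<le> Sf powr (a/p) * Sg powr (a/q)" .
  have Sf0: "0 \<le> Sf" and Sg0: "0 \<le> Sg" by (simp_all add: Sf_def Sg_def sum_nonneg)
  have "(1 / real L) * S \<le> (1 / real L) powr (a/p + a/q) * (Sf powr (a/p) * Sg powr (a/q))"
    using S L ap by (simp add: divide_right_mono)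
  also have "\<dots> = ((1 / real L) * Sf) powr (a/p) * ((1 / real L) * Sg) powr (a/q)"
    using Sf0 Sg0 by (simp add: powr_add powr_divide)
  finally have "((1 / real L) * S) powr (1/a)
      \<le> (((1 / real L) * Sf) powr (a/p) * ((1 / real L) * Sg) powr (a/q)) powr (1/a)"
    using a by (intro powr_mono2) (auto simp: S_def sum_nonneg)
  also have "\<dots> = ((1 / real L) * Sf) powr (1/p) * ((1 / real L) * Sg) powr (1/q)"
    using a Sf0 Sg0 by (simp add: powr_mult powr_powr)
  finally show ?thesis
    by (simp add: power_mean_def S_def Sf_def Sg_def)
qed

lemma power_mean_const: "1 \<le> L \<Longrightarrow> a \<noteq> 0 \<Longrightarrow> power_mean L a (\<lambda>_. C) = \<bar>C\<bar>"
  by (simp add: power_mean_def powr_powr)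

lemma power_mean_mono_exponent:
  assumes L: "1 \<le> L" and a: "0 < a" "a \<le> b"
  shows "power_mean L a f \<le> power_mean L b f"
proof (cases "a = b")
  case False
  define c where "c = a * b / (b - a)"
  have "c > 0" "1/a = 1/b + 1/c"
    using a False by (auto simp: c_def field_simps)
  then have "power_mean L a (\<lambda>l. f l * 1) \<le> power_mean L b f * power_mean L c (\<lambda>_. 1)"
    using a by (intro power_mean_Holder[OF L]) auto
  then show ?thesis
    using L \<open>c > 0\<close> by (simp add: power_mean_const)
qed simp

lemma power_mean_mono:
  assumes "0 < a" and "\<And>l. l \<in> {1..L} \<Longrightarrow> \<bar>f l\<bar> \<le> \<bar>g l\<bar>"
  shows "power_mean L a f \<le> power_mean L a g"
proof -
  have "0 \<le> (\<Sum>l=1..L. \<bar>f l\<bar> powr a)" by (simp add: sum_nonneg)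
  then show ?thesis
    unfolding power_mean_def using assms by (intro powr_mono2 mult_left_mono sum_mono) auto
qed

lemma power_mean_mult_const:
  assumes "0 < a"
  shows "power_mean L a (\<lambda>l. C * f l) = \<bar>C\<bar> * power_mean L a f"
proof -
  define S where "S = (1 / real L) * (\<Sum>l=1..L. \<bar>f l\<bar> powr a)"
  have "(1 / real L) * (\<Sum>l=1..L. \<bar>C * f l\<bar> powr a) = \<bar>C\<bar> powr a * S"
    by (simp add: S_def abs_mult powr_mult sum_distrib_left)
  moreover have "0 \<le> S"
    by (simp add: S_def sum_nonneg)
  then have "(\<bar>C\<bar> powr a * S) powr (1/a) = \<bar>C\<bar> * S powr (1/a)"
    using assms by (simp add: powr_mult powr_powr)
  ultimately show ?thesis
    unfolding power_mean_def S_def by (simp only:)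
qed

section \<open>The normalised norms\<close>

lemma normLq_enat: "1 \<le> q \<Longrightarrow> normLq L (enat q) f = power_mean L (real q) f"
proof -
  assume "1 \<le> q"
  then have "\<bar>y\<bar> ^ q = \<bar>y\<bar> powr real q" for y :: real
    by (cases "y = 0") (auto simp: powr_realpow)
  then show ?thesis
    by (simp add: normLq_def power_mean_def)
qed

lemma normLq_infinity_ge: "l \<in> {1..L} \<Longrightarrow> \<bar>f l\<bar> \<le> normLq L \<infinity> f"
  by (simp add: normLq_def)

lemma normLq_infinity_le: "1 \<le> L \<Longrightarrow> (\<And>l. l \<in> {1..L} \<Longrightarrow> \<bar>f l\<bar> \<le> C) \<Longrightarrow> normLq L \<infinity> f \<le> C"
  by (simp add: normLq_def)

lemma normLq_nonneg: "1 \<le> L \<Longrightarrow> 0 \<le> normLq L q f"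
proof (cases q)
  case infinity
  assume "1 \<le> L"
  then have "\<bar>f 1\<bar> \<le> normLq L \<infinity> f"
    by (simp add: normLq_infinity_ge)
  then show ?thesis
    unfolding infinity by linarith
qed (simp add: normLq_def)

lemma normLq_mono:
  assumes L: "1 \<le> L" and le: "\<And>l. l \<in> {1..L} \<Longrightarrow> \<bar>f l\<bar> \<le> \<bar>g l\<bar>"
  shows "normLq L q f \<le> normLq L q g"
proof (cases q)
  case (enat q')
  have "(\<Sum>l=1..L. \<bar>f l\<bar> ^ q') \<le> (\<Sum>l=1..L. \<bar>g l\<bar> ^ q')"
    using le by (intro sum_mono power_mono) auto
  then show ?thesis
    unfolding enat normLq_def
    by (auto intro!: powr_mono2 divide_right_mono divide_nonneg_nonneg sum_nonneg)
next
  case infinity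
  show ?thesis
    unfolding infinity using L le normLq_infinity_ge
    by (intro normLq_infinity_le) (fastforce intro: order_trans)+
qed

lemma normLq_const_one: "1 \<le> L \<Longrightarrow> normLq L q (\<lambda>_. 1) = 1"
  by (cases q) (simp_all add: normLq_def)

lemma normLq_le_infinity:
  assumes L: "1 \<le> L" and k: "1 \<le> k"
  shows "normLq L k f \<le> normLq L \<infinity> f"
proof (cases k)
  case (enat k')
  with k have "1 \<le> k'"
    by (simp add: one_enat_def)
  then have "power_mean L (real k') f \<le> power_mean L (real k') (\<lambda>_. normLq L \<infinity> f)"
    by (intro power_mean_mono) (auto simp: normLq_infinity_ge normLq_nonneg[OF L])
  with \<open>1 \<le> k'\<close> show ?thesis
    using L by (simp add: enat normLq_enat power_mean_const normLq_nonneg)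
qed simp

lemma normLq_infinity_mult:
  assumes L: "1 \<le> L"
  shows "normLq L \<infinity> (\<lambda>l. x l * c l) \<le> normLq L \<infinity> x * normLq L \<infinity> c"
  using L by (intro normLq_infinity_le)
    (auto simp: abs_mult intro!: mult_mono normLq_infinity_ge normLq_nonneg)

lemma power_mean_mult_le_infinity:
  assumes L: "1 \<le> L" and a: "0 < a"
  shows "power_mean L a (\<lambda>l. x l * c l) \<le> power_mean L a x * normLq L \<infinity> c"
proof -
  have "\<bar>x l * c l\<bar> \<le> \<bar>normLq L \<infinity> c * x l\<bar>" if "l \<in> {1..L}" for l
    using normLq_infinity_ge[OF that, of c] normLq_nonneg[OF L, of \<infinity> c]
    by (simp add: abs_mult mult.commute[of "\<bar>x l\<bar>"] mult_right_mono)
  then have "power_mean L a (\<lambda>l. x l * c l) \<le> power_mean L a (\<lambda>l. normLq L \<infinity> c * x l)"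
    using a by (intro power_mean_mono)
  also have "\<dots> = normLq L \<infinity> c * power_mean L a x"
    using a L by (simp add: power_mean_mult_const normLq_nonneg)
  finally show ?thesis
    by (simp add: mult.commute)
qed

lemma exps_okE:
  assumes "exps_ok k r m"
  obtains (infinity) "1 \<le> k" "r = \<infinity>" "m = \<infinity>"
  | (finite_infinity) k' m' where "k = enat k'" "m = enat m'" "1 \<le> k'" "k' \<le> m'" "r = \<infinity>"
  | (finite) k' m' r' where "k = enat k'" "m = enat m'" "r = enat r'" "1 \<le> k'" "k' < m'"
      "real (k' * m') / real (m' - k') \<le> real r'"
  using assms unfolding exps_ok_def by (metis le_neq_implies_less)

lemma normLq_Holder:
  assumes L: "1 \<le> L" and exps: "exps_ok k r m"
  shows "normLq L k (\<lambda>l. x l * c l) \<le> normLq L m x * normLq L r c"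
  using exps
proof (cases rule: exps_okE)
  case infinity
  have "normLq L k (\<lambda>l. x l * c l) \<le> normLq L \<infinity> (\<lambda>l. x l * c l)"
    using L infinity by (intro normLq_le_infinity)
  also have "\<dots> \<le> normLq L m x * normLq L r c"
    using L infinity by (simp add: normLq_infinity_mult)
  finally show ?thesis .
next
  case (finite_infinity k' m')
  then have "power_mean L (real k') (\<lambda>l. x l * c l) \<le> power_mean L (real k') x * normLq L \<infinity> c"
    using L by (intro power_mean_mult_le_infinity) auto
  also have "\<dots> \<le> power_mean L (real m') x * normLq L \<infinity> c"
    using L finite_infinity
    by (intro mult_right_mono power_mean_mono_exponent normLq_nonneg) auto
  finally show ?thesis
    using finite_infinity by (simp add: normLq_enat)
next
  case (finite k' m' r')
  define s where "s = real (k' * m') / real (m' - k')"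
  have "0 < s" "1 / real k' = 1 / real m' + 1 / s"
    using finite by (auto simp: s_def field_simps of_nat_diff)
  then have "power_mean L (real k') (\<lambda>l. x l * c l) \<le> power_mean L (real m') x * power_mean L s c"
    using L finite by (intro power_mean_Holder) auto
  also have "\<dots> \<le> power_mean L (real m') x * power_mean L (real r') c"
    using L finite \<open>0 < s\<close>
    by (intro mult_left_mono power_mean_mono_exponent power_mean_nonneg) (auto simp: s_def)
  moreover have "0 < real r'"
    using finite \<open>0 < s\<close> unfolding s_def by linarith
  then have "1 \<le> r'"
    by simp
  ultimately show ?thesis
    using finite by (simp add: normLq_enat)
qed

lemma normLq_le_of_ratio_bound:
  assumes L: "1 \<le> L" and exps: "exps_ok k r m"
    and ratio: "\<And>l. l \<in> {1..L} \<Longrightarrow> \<bar>v l\<bar> \<le> \<bar>x l * c l\<bar>" and x: "normLq L m x \<le> 1"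
  shows "normLq L k v \<le> normLq L r c"
proof -
  have "normLq L k v \<le> normLq L k (\<lambda>l. x l * c l)"
    using L ratio by (rule normLq_mono)
  also have "\<dots> \<le> normLq L m x * normLq L r c"
    using L exps by (rule normLq_Holder)
  also have "\<dots> \<le> normLq L r c"
    using mult_right_mono[OF x normLq_nonneg[OF L, of r c]] by simp
  finally show ?thesis .
qed

section \<open>Empirical and oracle probabilities\<close>

lemma matches_at_snoc:
  "matches_at X (u @ [a]) i \<longleftrightarrow> matches_at X u (i - 1) \<and> X i = a"
proof -
  have "matches_at X (u @ [a]) i \<longleftrightarrow>
      (\<forall>j<length u. X (i - int (length u) + int j) = u ! j) \<and> X i = a"
    unfolding matches_at_def by (auto simp: nth_append less_Suc_eq)
  then show ?thesis
    by (simp add: matches_at_def)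
qed

lemma card_filter_int_atLeastAtMost:
  "card {i \<in> {int a..int b}. P i} = card {i \<in> {a..b}. P (int i)}"
proof -
  have "{i \<in> {int a..int b}. P i} = int ` {i \<in> {a..b}. P (int i)}"
    by (auto simp flip: image_int_atLeastAtMost)
  then show ?thesis
    by (simp add: card_image)
qed

text \<open>The positions \<open>i \<le> n\<close> preceded by an occurrence of \<open>u\<close>: they index the sum defining
  \<open>pbar\<close>, and there are \<open>N\<^sub>n\<^sub>-\<^sub>1(u)\<close> of them.\<close>
definition succ_positions :: "(int \<Rightarrow> 'a) \<Rightarrow> nat \<Rightarrow> 'a list \<Rightarrow> nat set" where
  "succ_positions X n u = {i \<in> {length u + 1..n}. matches_at X u (int i - 1)}"

lemma finite_succ_positions [simp]: "finite (succ_positions X n u)"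
  by (simp add: succ_positions_def)

lemma cnt_pred_eq_card_succ_positions:
  assumes "1 \<le> n"
  shows "cnt X (n - 1) u = card (succ_positions X n u)"
proof -
  have "succ_positions X n u = Suc ` {i \<in> {length u..n - 1}. matches_at X u (int i)}"
  proof (intro equalityI subsetI)
    fix i
    assume "i \<in> succ_positions X n u"
    then show "i \<in> Suc ` {i \<in> {length u..n - 1}. matches_at X u (int i)}"
      by (intro image_eqI[of _ _ "i - 1"]) (auto simp: succ_positions_def of_nat_diff)
  qed (use assms in \<open>auto simp: succ_positions_def\<close>)
  then show ?thesis
    using card_filter_int_atLeastAtMost[of "length u" "n - 1"] by (simp add: cnt_def card_image)
qed

lemma cnt_snoc_eq_card_succ_positions:
  "cnt X n (u @ [a]) = card {i \<in> succ_positions X n u. X (int i) = a}"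
proof -
  have "cnt X n (u @ [a]) = card {i \<in> {length u + 1..n}. matches_at X (u @ [a]) (int i)}"
    unfolding cnt_def using card_filter_int_atLeastAtMost[of "length u + 1" n] by simp
  then show ?thesis
    by (simp add: matches_at_snoc succ_positions_def conj_assoc)
qed

lemma average_in_simplex:
  assumes I: "finite I" "I \<noteq> {}" and q: "\<And>i. i \<in> I \<Longrightarrow> q i \<in> simplex"
  shows "(\<lambda>a. (\<Sum>i\<in>I. q i a) / real (card I)) \<in> simplex"
proof -
  have "(\<Sum>a\<in>UNIV. \<Sum>i\<in>I. q i a) = (\<Sum>i\<in>I. \<Sum>a\<in>UNIV. q i a)"
    by (rule sum.swap)
  also have "\<dots> = real (card I)"
    using q by (simp add: simplex_def)
  finally have "(\<Sum>a\<in>UNIV. (\<Sum>i\<in>I. q i a) / real (card I)) = 1"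
    using I by (simp flip: sum_divide_distrib)
  moreover have "0 \<le> (\<Sum>i\<in>I. q i a) / real (card I)" for a
    using q by (auto simp: simplex_def intro!: divide_nonneg_nonneg sum_nonneg)
  ultimately show ?thesis
    by (simp add: simplex_def)
qed

lemma point_mass_in_simplex: "(\<lambda>a. if b = a then 1 else 0) \<in> simplex"
  by (simp add: simplex_def)

lemma allposE:
  assumes "allpos X L n w" "1 \<le> L"
  obtains u where "w = Fin u" "\<And>l. l \<in> {1..L} \<Longrightarrow> 0 < cnt (X l) (n - 1) u"
  using assms by (cases w) (auto simp: allpos_def)

lemma phat_in_simplex:
  assumes ap: "allpos X L n w" and L: "1 \<le> L" and n: "1 \<le> n" and l: "l \<in> {1..L}"
  shows "phat X L n l w \<in> simplex"
proof -
  obtain u where w: "w = Fin u" and pos: "0 < cnt (X l) (n - 1) u"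
    using allposE[OF ap L] l by metis
  define S where "S = succ_positions (X l) n u"
  have card: "cnt (X l) (n - 1) u = card S"
    unfolding S_def by (rule cnt_pred_eq_card_succ_positions[OF n])
  have "real (cnt (X l) n (u @ [a])) = (\<Sum>i\<in>S. if X l (int i) = a then 1 else 0)" for a
    by (simp add: S_def cnt_snoc_eq_card_succ_positions flip: sum.inter_filter)
  then have "phat X L n l w = (\<lambda>a. (\<Sum>i\<in>S. if X l (int i) = a then 1 else 0) / real (card S))"
    using ap by (simp add: phat_def w card[simplified] fun_eq_iff)
  moreover have "finite S" "S \<noteq> {}"
    using pos unfolding card by (auto simp: S_def)
  ultimately show ?thesis
    by (simp add: average_in_simplex point_mass_in_simplex)
qed

lemma pbar_in_simplex:
  assumes ap: "allpos X L n w" and L: "1 \<le> L" and n: "1 \<le> n" and l: "l \<in> {1..L}"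
    and p: "\<And>x. p l x \<in> simplex"
  shows "pbar X p L n l w \<in> simplex"
proof -
  obtain u where w: "w = Fin u" and pos: "0 < cnt (X l) (n - 1) u"
    using allposE[OF ap L] l by metis
  define S where "S = succ_positions (X l) n u"
  have card: "cnt (X l) (n - 1) u = card S"
    unfolding S_def by (rule cnt_pred_eq_card_succ_positions[OF n])
  have "(\<Sum>i\<in>{length u + 1..n}. if matches_at (X l) u (int i - 1) then f i else 0)
      = (\<Sum>i\<in>S. f i)" for f :: "nat \<Rightarrow> real"
    unfolding S_def succ_positions_def by (simp only: sum.inter_filter finite_atLeastAtMost)
  then have "pbar X p L n l w = (\<lambda>a. (\<Sum>i\<in>S. p l (\<lambda>j. X l (int i - 1 - int j)) a) / real (card S))"
    using ap by (simp add: pbar_def w card[simplified] fun_eq_iff)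
  moreover have "finite S" "S \<noteq> {}"
    using pos unfolding card by (auto simp: S_def)
  ultimately show ?thesis
    using p by (simp add: average_in_simplex)
qed

lemma uniform_in_simplex: "(\<lambda>_::'a::finite. 1 / real (card (UNIV :: 'a set))) \<in> simplex"
  by (simp add: simplex_def)

lemma metric_phat_pbar_commute:
  assumes ap: "allpos X L n w" and L: "1 \<le> L" and n: "1 \<le> n" and l: "l \<in> {1..L}"
    and p: "\<And>x. p l x \<in> simplex" and d: "metric_on_simplex d"
  shows "d (phat X L n l w) (pbar X p L n l w) = d (pbar X p L n l w) (phat X L n l w)"
proof -
  have "phat X L n l w \<in> simplex" "pbar X p L n l w \<in> simplex"
    using ap L n l by (rule phat_in_simplex) (use ap L n l p in \<open>rule pbar_in_simplex\<close>)
  then show ?thesis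
    using d by (simp add: metric_on_simplex_def)
qed

lemma metric_phat_pbar_eq_0_if_not_allpos:
  assumes "\<not> allpos X L n w" and d: "metric_on_simplex d"
  shows "d (phat X L n l w) (pbar X p L n l w) = 0"
proof -
  have "phat X L n l w = (\<lambda>_. 1 / real (card (UNIV :: 'a set)))"
    "pbar X p L n l w = (\<lambda>_. 1 / real (card (UNIV :: 'a set)))"
    using assms(1) by (simp_all add: phat_def pbar_def fun_eq_iff)
  then show ?thesis
    using d uniform_in_simplex unfolding metric_on_simplex_def by metis
qed

theorem theorem3p1:
  fixes X :: "nat \<Rightarrow> int \<Rightarrow> 'a::finite"
    and p :: "nat \<Rightarrow> (nat \<Rightarrow> 'a) \<Rightarrow> 'a \<Rightarrow> real"
    and d :: "nat \<Rightarrow> ('a \<Rightarrow> real) \<Rightarrow> ('a \<Rightarrow> real) \<Rightarrow> real"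
    and conf :: "nat \<Rightarrow> 'a str \<Rightarrow> real"
    and L n :: nat and k r m :: enat
  assumes L: "1 \<le> L" and n: "1 \<le> n"
    and p_prob: "\<And>l x. l \<in> {1..L} \<Longrightarrow> p l x \<in> simplex"
    and d_metric: "\<And>l. l \<in> {1..L} \<Longrightarrow> metric_on_simplex (d l)"
    and conf_range: "\<And>l w. l \<in> {1..L} \<Longrightarrow> 0 \<le> conf l w \<and> conf l w \<le> 1"
    and conf_mono: "\<And>l w w'. l \<in> {1..L} \<Longrightarrow> suffix_str w w' \<Longrightarrow> conf l w \<le> conf l w'"
    and exps: "exps_ok k r m"
    and good: "Good X p d conf L n m"
  shows "normLq L k (\<lambda>l. d l (phat X L n l w) (pbar X p L n l w)) \<le> normLq L r (\<lambda>l. conf l w)"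
proof (cases "allpos X L n w")
  case True
  \<comment> \<open>Where \<open>conf\<close> vanishes, \<open>x\<close> is \<open>0\<close> by the convention \<open>a / 0 = 0\<close>, and \<open>Good\<close>
    forces the distance to vanish as well.\<close>
  define x where "x = (\<lambda>l. d l (pbar X p L n l w) (phat X L n l w) / conf l w)"
  have good_w: "\<forall>l\<in>{1..L}. conf l w = 0 \<longrightarrow> d l (pbar X p L n l w) (phat X L n l w) = 0"
    "normLq L m x \<le> 1"
    using good True unfolding Good_def x_def by simp_all
  have "\<bar>d l (phat X L n l w) (pbar X p L n l w)\<bar> \<le> \<bar>x l * conf l w\<bar>" if l: "l \<in> {1..L}" for l
    using metric_phat_pbar_commute[of X L n w l p, OF True L n l p_prob[OF l] d_metric[OF l]]
      good_w(1) l
    by (cases "conf l w = 0") (simp_all add: x_def)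
  with L exps show ?thesis
    using good_w(2) by (rule normLq_le_of_ratio_bound)
next
  case False
  then have "\<bar>d l (phat X L n l w) (pbar X p L n l w)\<bar> \<le> \<bar>1 * conf l w\<bar>" if "l \<in> {1..L}" for l
    using metric_phat_pbar_eq_0_if_not_allpos[OF False d_metric[OF that]] by simp
  moreover have "normLq L m (\<lambda>_. 1) \<le> 1"
    using normLq_const_one[OF L] by simp
  ultimately show ?thesis
    using L exps by (intro normLq_le_of_ratio_bound)
qed

end
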